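(* Let $p\geqslant 5$ be a prime and \[ \varpi_p = \psi\left( \frac{1}{p} \right) + 2p-1 + \gamma + p\left( \log p - \sum_{j=1}^{p} \frac{1}{j} \right). \] Then $(p-1)(1-\gamma)-\log 2-1< \varpi_p < (p-1)(1-\gamma)$.
   Context: $\psi=\Gamma'/\Gamma$ is the digamma function and $\gamma$ the Euler–Mascheroni constant. *)

theory Defs
  imports "HOL-Analysis.Analysis"
begin

definition varpi :: "nat \<Rightarrow> real" where
  "varpi p = Digamma (1 / real p) + 2 * real p - 1 + euler_mascheroni
     + real p * (ln (real p) - (\<Sum>j=1..p. 1 / real j))"

end

theory Submission
  imports Defs
begin

text \<open>
  Since \<open>\<psi>(1/p) = \<psi>(1 + 1/p) - p\<close>, the quantity \<open>\<varpi>\<^sub>p - (p - 1)(1 - \<gamma>)\<close> equals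
  \<open>D - \<gamma> - p E\<close> with \<open>D = \<psi>(1 + 1/p) + \<gamma>\<close> and \<open>E = H\<^sub>p - log p - \<gamma>\<close>.
  The series for \<open>\<psi>\<close> gives \<open>0 < D \<le> 2/p\<close>, and the classical bounds on \<open>\<gamma>\<close>
  give \<open>2/(2p+1) - 1/(2p) \<le> E \<le> 1/(2p)\<close>. Hence \<open>p E\<close> lies between
  \<open>(2p-1)/(2(2p+1))\<close>, which exceeds \<open>2/p\<close> once \<open>p \<ge> 5\<close>, and \<open>1/2\<close>; together with
  \<open>\<gamma> < 13/22\<close> and \<open>log 2 \<ge> 2/3\<close> this yields both inequalities.
\<close>

lemma Digamma_one_plus_le:
  fixes x :: real
  assumes "x \<ge> 0"
  shows "Digamma (1 + x) + euler_mascheroni \<le> 2 * x"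
proof -
  have series: "(\<lambda>k. inverse (real (Suc k)) - inverse (1 + x + real k))
      sums (Digamma (1 + x) + euler_mascheroni)"
    using summable_Digamma[of "1 + x"] assms by (simp add: Digamma_def summable_sums)
  have "(\<lambda>n. 2 * x / real (Suc n)) \<longlonglongrightarrow> 0"
    using LIMSEQ_Suc[OF lim_const_over_n[of "2 * x"]] .
  then have telescope: "(\<lambda>k. 2 * x / real (Suc k) - 2 * x / real (Suc (Suc k))) sums (2 * x)"
    using telescope_sums'[of "\<lambda>n. 2 * x / real (Suc n)" 0] by simp
  have "inverse (real (Suc k)) - inverse (1 + x + real k)
      \<le> 2 * x / real (Suc k) - 2 * x / real (Suc (Suc k))" for k
  proof -
    have "inverse (real (Suc k)) - inverse (1 + x + real k) = x / ((real k + 1) * (real k + 1 + x))"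
      using assms by (simp add: field_simps)
    also have "\<dots> = 2 * x / ((real k + 1) * (2 * (real k + 1 + x)))"
      by (subst mult.left_commute) simp
    also have "\<dots> \<le> 2 * x / ((real k + 1) * (real k + 2))"
      using assms by (intro frac_le mult_left_mono) auto
    also have "\<dots> = 2 * x / real (Suc k) - 2 * x / real (Suc (Suc k))"
      by (simp add: field_simps)
    finally show ?thesis .
  qed
  then show ?thesis
    using sums_le[OF _ series telescope] by blast
qed

lemma harm_minus_ln_minus_euler_mascheroni_le:
  assumes "n > 0"
  shows "harm n - ln (real n) - euler_mascheroni \<le> 1 / (2 * real n)"
proof -
  have "euler_mascheroni \<ge> harm n - ln (real n + 1) + 1 / (2 * (real n + 1))"
    using euler_mascheroni_bounds[of n] assms by (simp add: inverse_eq_divide add.commute)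
  moreover have "ln (real n + 1) - ln (real n) \<le> (1 / real n + 1 / (real n + 1)) / 2"
    using ln_inverse_approx_le[of "real n" 1] assms by (simp add: inverse_eq_divide)
  moreover have "(1 / real n + 1 / (real n + 1)) / 2 - 1 / (2 * (real n + 1)) = 1 / (2 * real n)"
    by (simp add: add_divide_distrib mult.commute)
  ultimately show ?thesis
    by linarith
qed

lemma harm_minus_ln_minus_euler_mascheroni_ge:
  assumes "n > 0"
  shows "2 / (2 * real n + 1) - 1 / (2 * real n) \<le> harm n - ln (real n) - euler_mascheroni"
proof -
  have "euler_mascheroni \<le> harm n - ln (real n + 1) + 1 / (2 * real n)"
    using euler_mascheroni_bounds[of n] assms by (simp add: inverse_eq_divide add.commute)
  moreover have "2 / (2 * real n + 1) \<le> ln (real n + 1) - ln (real n)"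
    using ln_inverse_approx_ge[of "real n" "real n + 1"] assms by (simp add: add.commute)
  ultimately show ?thesis
    by linarith
qed

lemma real_mult_harm_minus_ln_minus_euler_mascheroni_bounds:
  assumes "n > 0"
  shows "(2 * real n - 1) / (2 * (2 * real n + 1))
           \<le> real n * (harm n - ln (real n) - euler_mascheroni)"
    and "real n * (harm n - ln (real n) - euler_mascheroni) \<le> 1 / 2"
proof -
  have "real n * (2 / (2 * real n + 1) - 1 / (2 * real n))
      \<le> real n * (harm n - ln (real n) - euler_mascheroni)"
    using harm_minus_ln_minus_euler_mascheroni_ge[OF assms] by (intro mult_left_mono) auto
  moreover have "real n * (2 / (2 * real n + 1) - 1 / (2 * real n))
      = (2 * real n - 1) / (2 * (2 * real n + 1))"
    using assms by (simp add: divide_simps)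
  ultimately show "(2 * real n - 1) / (2 * (2 * real n + 1))
      \<le> real n * (harm n - ln (real n) - euler_mascheroni)"
    by simp
  have "real n * (harm n - ln (real n) - euler_mascheroni) \<le> real n * (1 / (2 * real n))"
    using harm_minus_ln_minus_euler_mascheroni_le[OF assms] by (intro mult_left_mono) auto
  then show "real n * (harm n - ln (real n) - euler_mascheroni) \<le> 1 / 2"
    using assms by simp
qed

lemma varpi_eq:
  assumes "p > 0"
  shows "varpi p = (real p - 1) * (1 - euler_mascheroni)
           + (Digamma (1 + 1 / real p) + euler_mascheroni) - euler_mascheroni
           - real p * (harm p - ln (real p) - euler_mascheroni)"
proof -
  have "Digamma (1 + 1 / real p) = Digamma (1 / real p) + real p"
    using Digamma_plus1[of "1 / real p"] assms by (simp add: add.commute)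
  moreover have "(\<Sum>j=1..p. 1 / real j) = harm p"
    by (simp add: harm_def inverse_eq_divide)
  ultimately show ?thesis
    unfolding varpi_def by (simp add: algebra_simps)
qed

lemma two_div_less_of_five_le:
  fixes p :: real
  assumes "p \<ge> 5"
  shows "2 / p < (2 * p - 1) / (2 * (2 * p + 1))"
proof -
  have "5 * (2 * p - 1) \<le> p * (2 * p - 1)"
    using assms by (intro mult_right_mono) auto
  then have "4 * (2 * p + 1) < p * (2 * p - 1)"
    using assms by (simp add: algebra_simps)
  then show ?thesis
    using assms by (simp add: field_simps)
qed

theorem lemma7p4:
  fixes p :: nat
  assumes "prime p" and "p \<ge> 5"
  shows "(real p - 1) * (1 - euler_mascheroni) - ln 2 - 1 < varpi p
         \<and> varpi p < (real p - 1) * (1 - euler_mascheroni)"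
proof -
  have p: "real p \<ge> 5" and "p > 0"
    using assms(2) by simp_all
  have Digamma_lower: "0 < Digamma (1 + 1 / real p) + euler_mascheroni"
    using Digamma_real_strict_mono[of 1 "1 + 1 / real p"] p by simp
  have Digamma_upper: "Digamma (1 + 1 / real p) + euler_mascheroni \<le> 2 / real p"
    using Digamma_one_plus_le[of "1 / real p"] by simp
  show ?thesis
    using varpi_eq[OF \<open>p > 0\<close>] Digamma_lower Digamma_upper two_div_less_of_five_le[OF p]
      real_mult_harm_minus_ln_minus_euler_mascheroni_bounds[OF \<open>p > 0\<close>]
      ln2_ge_two_thirds euler_mascheroni_less_13_over_22 euler_mascheroni_pos
    by linarith
qed

end
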